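(* Let $V$ be a finite-dimensional vector space over $\mathbb{F}_2$ with nondegenerate quadratic form $Q$ and associated bilinear form $B$. Let $W$ be a subspace of $V$ of dimension $d\ge 2$ with $d\equiv 2\pmod 4$ such that $W$ has a symmetric basis (with respect to the restriction of $Q$). Suppose $\{a,b\},\{c,d'\},\{g,h\}$ are three hyperbolic pairs contained in $W^{\perp}\setminus W$ which are pairwise perpendicular (every vector of one pair is orthogonal under $B$ to every vector of each other pair). Let $W'=W\perp\langle a,b\rangle\perp\langle c,d'\rangle\perp\langle g,h\rangle$. Then $W'$ has a symmetric basis.
   Context: The associated bilinear form of $Q$ is $B(u,v)=Q(u+v)-Q(u)-Q(v)$. $W^\perp=\{v\in V: B(w,v)=0\ \forall w\in W\}$. A pair $\{u,v\}$ of distinct vectors is a hyperbolic pair if $Q(u)=Q(v)=0$ and $B(u,v)=1$. A basis $\{v_1,\dots,v_m\}$ of a subspace is symmetric if $Q(v_i)=0$ for all $i$ and $B(v_i,v_j)=1$ for all $i\ne j$. *)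

theory Defs
  imports Complex_Main "HOL-Library.Z2"
begin

text \<open>Vector spaces over the field F_2 are modelled with the library type bit
  (HOL-Library.Z2) as scalar field and the library locale vector_space.\<close>

definition polar :: "('v::ab_group_add \<Rightarrow> bit) \<Rightarrow> 'v \<Rightarrow> 'v \<Rightarrow> bit" where
  "polar Q u v = Q (u + v) - Q u - Q v"

definition quadratic_form :: "(bit \<Rightarrow> 'v::ab_group_add \<Rightarrow> 'v) \<Rightarrow> ('v \<Rightarrow> bit) \<Rightarrow> bool" where
  "quadratic_form scale Q \<longleftrightarrow>
     (\<forall>c x. Q (scale c x) = c ^ 2 * Q x) \<and>
     (\<forall>u v w. polar Q (u + v) w = polar Q u w + polar Q v w) \<and>
     (\<forall>c u v. polar Q (scale c u) v = c * polar Q u v)"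

definition nondegenerate :: "('v::ab_group_add \<Rightarrow> bit) \<Rightarrow> bool" where
  "nondegenerate Q \<longleftrightarrow> (\<forall>v. (\<forall>u. polar Q u v = 0) \<longrightarrow> v = 0)"

definition perp :: "('v::ab_group_add \<Rightarrow> bit) \<Rightarrow> 'v set \<Rightarrow> 'v set" where
  "perp Q W = {v. \<forall>w\<in>W. polar Q w v = 0}"

definition hyperbolic_pair :: "('v::ab_group_add \<Rightarrow> bit) \<Rightarrow> 'v \<Rightarrow> 'v \<Rightarrow> bool" where
  "hyperbolic_pair Q u v \<longleftrightarrow> u \<noteq> v \<and> Q u = 0 \<and> Q v = 0 \<and> polar Q u v = 1"

definition symmetric_basis ::
  "(bit \<Rightarrow> 'v::ab_group_add \<Rightarrow> 'v) \<Rightarrow> ('v \<Rightarrow> bit) \<Rightarrow> 'v set \<Rightarrow> 'v set \<Rightarrow> bool" where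
  "symmetric_basis scale Q W S \<longleftrightarrow>
     \<not> module.dependent scale S \<and> module.span scale S = W \<and>
     (\<forall>v\<in>S. Q v = 0) \<and> (\<forall>u\<in>S. \<forall>v\<in>S. u \<noteq> v \<longrightarrow> polar Q u v = 1)"

definition has_symmetric_basis ::
  "(bit \<Rightarrow> 'v::ab_group_add \<Rightarrow> 'v) \<Rightarrow> ('v \<Rightarrow> bit) \<Rightarrow> 'v set \<Rightarrow> bool" where
  "has_symmetric_basis scale Q W \<longleftrightarrow> (\<exists>S. symmetric_basis scale Q W S)"

end

theory Submission
  imports Defs
begin

text \<open>Let \<open>S\<close> be a symmetric basis of \<open>W\<close>, so \<open>|S| = d \<equiv> 2 (mod 4)\<close>, and let \<open>s\<close> be the sum of
  the vectors of \<open>S\<close>. Then \<open>Q s = (d choose 2) = 1\<close> and \<open>B(w, s) = d - 1 = 1\<close> for \<open>w \<in> S\<close>.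
  The three hyperbolic pairs span a space containing six vectors \<open>y\<^sub>i\<close> with \<open>Q y\<^sub>i = 1\<close> and
  \<open>B(y\<^sub>i, y\<^sub>j) = 1\<close> for \<open>i \<noteq> j\<close>, spanning the same space. As the \<open>y\<^sub>i\<close> are orthogonal to \<open>W\<close>,
  the vectors \<open>s + y\<^sub>i\<close> satisfy \<open>Q(s + y\<^sub>i) = 0\<close> and have product \<open>1\<close> with each other and
  with \<open>S\<close>; so \<open>S \<union> {s + y\<^sub>i}\<close> is a symmetric set spanning \<open>W'\<close>. It is independent because
  its Gram matrix \<open>J - I\<close> has even size \<open>d + 6\<close>, hence squares to the identity over \<open>\<bbbF>\<^sub>2\<close>.\<close>

definition symmetric_set :: "('v::ab_group_add \<Rightarrow> bit) \<Rightarrow> 'v set \<Rightarrow> bool" where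
  "symmetric_set Q S \<longleftrightarrow> (\<forall>v\<in>S. Q v = 0) \<and> pairwise (\<lambda>u v. polar Q u v = 1) S"

lemma symmetric_basis_iff:
  "symmetric_basis scale Q W S \<longleftrightarrow>
     \<not> module.dependent scale S \<and> module.span scale S = W \<and> symmetric_set Q S"
  unfolding symmetric_basis_def symmetric_set_def pairwise_def by blast

lemma bit_eq_sum_diff: "(a::bit) = b + c + (a - b - c)"
  by (cases a; cases b; cases c) simp_all

lemma bit_diff_diff_self: "(a::bit) - b - b = a"
  by (cases a; cases b) simp_all

lemma of_nat_bit_eq: "(of_nat n :: bit) = (if even n then 0 else 1)"
  by (induction n) auto

lemma odd_choose_two_if_mod_4_eq_2:
  assumes "n mod 4 = (2::nat)"
  shows "odd (n choose 2)"
proof -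
  obtain k where n: "n = 4 * k + 2" using assms by (metis div_mult_mod_eq mult.commute)
  have "n * (n - 1) = 2 * ((2 * k + 1) * (4 * k + 1))" unfolding n by (simp add: algebra_simps)
  then have "n choose 2 = (2 * k + 1) * (4 * k + 1)" by (simp add: choose_two)
  then show ?thesis by simp
qed

lemma (in module) span_Un_image_add:
  assumes "s \<in> span S"
  shows "span (S \<union> (\<lambda>y. s + y) ` Y) = span (S \<union> Y)"
proof -
  have "s + y \<in> span (S \<union> Y)" if "y \<in> Y" for y
    using assms that by (meson span_add span_base span_mono sup_ge1 sup_ge2 subsetD)
  moreover have "y \<in> span (S \<union> (\<lambda>y. s + y) ` Y)" if "y \<in> Y" for y
  proof -
    have "s \<in> span (S \<union> (\<lambda>y. s + y) ` Y)" using assms span_mono[of S] by blast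
    moreover have "s + y \<in> span (S \<union> (\<lambda>y. s + y) ` Y)" using that by (simp add: span_base)
    ultimately show ?thesis by (simp add: span_add_eq)
  qed
  ultimately show ?thesis
    unfolding span_eq by (auto intro: span_base)
qed

definition hexad :: "'v::ab_group_add \<Rightarrow> 'v \<Rightarrow> 'v \<Rightarrow> 'v \<Rightarrow> 'v \<Rightarrow> 'v \<Rightarrow> 'v set" where
  "hexad a b c d g h = {d + g + h, c + g + h, b + c + d, a + c + d, a + b + h, a + b + g}"

locale quadratic_space_F2 = vector_space scale for scale :: "bit \<Rightarrow> 'v::ab_group_add \<Rightarrow> 'v" +
  fixes Q :: "'v \<Rightarrow> bit"
  assumes quadratic_form: "quadratic_form scale Q"
begin

lemma add_self_eq_zero: "x + x = (0::'v)"
proof -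
  have "x + x = scale (1 + 1) x" by (simp only: scale_left_distrib scale_one)
  then show ?thesis by simp
qed

lemma Q_zero: "Q 0 = 0"
  using quadratic_form unfolding quadratic_form_def by (metis power_zero_numeral scale_zero_left mult_zero_left)

lemma Q_add: "Q (u + v) = Q u + Q v + polar Q u v"
  unfolding polar_def by (rule bit_eq_sum_diff)

lemma polar_commute: "polar Q u v = polar Q v u"
  unfolding polar_def by (metis add.commute diff_right_commute)

lemma polar_self: "polar Q x x = 0"
  unfolding polar_def by (simp only: bit_diff_diff_self add_self_eq_zero Q_zero)

lemma polar_eq_one_imp_neq: "polar Q u v = 1 \<Longrightarrow> u \<noteq> v"
  using polar_self by auto

lemma polar_add_left: "polar Q (u + v) w = polar Q u w + polar Q v w"
  using quadratic_form unfolding quadratic_form_def by blast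

lemma polar_add_right: "polar Q w (u + v) = polar Q w u + polar Q w v"
  using polar_add_left polar_commute by metis

lemma polar_scale_right: "polar Q w (scale c v) = c * polar Q w v"
  using quadratic_form polar_commute unfolding quadratic_form_def by metis

lemma polar_zero_right: "polar Q t 0 = 0"
  unfolding polar_def by (simp add: Q_zero)

lemma polar_sum_right: "polar Q t (sum f T) = (\<Sum>u\<in>T. polar Q t (f u))"
proof (cases "finite T")
  case True
  then show ?thesis
    by (induction T rule: finite_induct) (simp_all add: polar_zero_right polar_add_right)
qed (simp add: polar_zero_right)

lemma polar_span_right_eq_zero:
  assumes "y \<in> span A" and "\<forall>v\<in>A. polar Q x v = 0"
  shows "polar Q x y = 0"
  using assms(1)
proof (induction rule: span_induct_alt)
  case base
  then show ?case by (rule polar_zero_right)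
next
  case (step c v y)
  then show ?case using assms(2) by (simp add: polar_add_right polar_scale_right)
qed

lemma sum_scale_eq_sum_support:
  assumes "finite S"
  shows "(\<Sum>v\<in>S. scale (u v) v) = sum id {v\<in>S. u v = 1}"
proof -
  have "(\<Sum>v\<in>S. scale (u v) v) = (\<Sum>v\<in>S. if u v = 1 then id v else 0)"
    by (intro sum.cong refl) (metis bit_not_one_iff scale_one scale_zero_left id_apply)
  also have "\<dots> = sum id {v\<in>S. u v = 1}"
    using assms by (subst sum.inter_filter) auto
  finally show ?thesis .
qed

lemma polar_sum_pairwise_one:
  assumes "finite T" "T \<subseteq> S" "t \<in> S" "pairwise (\<lambda>u v. polar Q u v = 1) S"
  shows "polar Q t (sum id T) = of_nat (card (T - {t}))"
proof -
  have "polar Q t (sum id T) = (\<Sum>u\<in>T. polar Q t u)" by (simp add: polar_sum_right)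
  also have "\<dots> = (\<Sum>u\<in>T - {t}. polar Q t u)"
    using assms(1) by (cases "t \<in> T") (simp_all add: sum.remove polar_self)
  also have "\<dots> = (\<Sum>u\<in>T - {t}. 1)"
    using assms(2-4) by (intro sum.cong refl) (auto simp: pairwise_def)
  finally show ?thesis by simp
qed

text \<open>If \<open>\<Sum>T = 0\<close>, every \<open>t \<in> S\<close> sees \<open>|T - {t}|\<close> even; for \<open>t \<in> T\<close> this makes \<open>|T|\<close> odd,
  for \<open>t \<notin> T\<close> even, and \<open>T = S\<close> is excluded by \<open>|S|\<close> even.\<close>
lemma sum_pairwise_one_neq_zero:
  assumes fin: "finite S" and ev: "even (card S)"
    and gram: "pairwise (\<lambda>u v. polar Q u v = 1) S"
    and TS: "T \<subseteq> S" and ne: "T \<noteq> {}"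
  shows "sum id T \<noteq> 0"
proof
  assume sum0: "sum id T = 0"
  have fT: "finite T" using fin TS finite_subset by blast
  have even_card: "even (card (T - {t}))" if "t \<in> S" for t
    using polar_sum_pairwise_one[OF fT TS that gram] sum0
    by (simp add: polar_zero_right of_nat_bit_eq split: if_splits)
  obtain t where t: "t \<in> T" using ne by blast
  have "odd (card T)"
    using even_card[of t] t TS fT ne by (cases "card T") (auto simp: card_Diff_singleton)
  moreover have "T \<noteq> S" using ev \<open>odd (card T)\<close> by auto
  then obtain t' where "t' \<in> S" "t' \<notin> T" using TS by blast
  ultimately show False using even_card[of t'] by simp
qed

lemma independent_if_even_pairwise_one:
  assumes fin: "finite S" and ev: "even (card S)"
    and gram: "pairwise (\<lambda>u v. polar Q u v = 1) S"
  shows "\<not> dependent S"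
proof
  assume "dependent S"
  then obtain u where u: "\<exists>v\<in>S. u v \<noteq> 0" "(\<Sum>v\<in>S. scale (u v) v) = 0"
    using dependent_finite[OF fin] by blast
  have "sum id {v\<in>S. u v = 1} \<noteq> 0"
    using u(1) by (intro sum_pairwise_one_neq_zero[OF fin ev gram]) auto
  then show False using u(2) sum_scale_eq_sum_support[OF fin] by simp
qed

lemma Q_sum_symmetric_set:
  assumes "finite T" "symmetric_set Q T"
  shows "Q (sum id T) = of_nat (card T choose 2)"
  using assms
proof (induction T rule: finite_induct)
  case empty
  then show ?case by (simp add: Q_zero numeral_2_eq_2)
next
  case (insert x F)
  have "polar Q x (sum id F) = of_nat (card (F - {x}))"
    using insert by (intro polar_sum_pairwise_one[of F "insert x F"]) (auto simp: symmetric_set_def)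
  moreover have "symmetric_set Q F"
    using insert.prems unfolding symmetric_set_def pairwise_insert by blast
  ultimately have "Q (sum id (insert x F)) = of_nat (card F choose 2) + of_nat (card F)"
    using insert by (simp add: Q_add symmetric_set_def)
  also have "\<dots> = of_nat (card (insert x F) choose 2)"
    using insert by (simp add: numeral_2_eq_2 del: add_bit_eq_xor)
  finally show ?case .
qed

lemma sum_symmetric_set_mod_4_eq_2:
  assumes sym: "symmetric_set Q S" and m4: "card S mod 4 = 2"
  shows "Q (sum id S) = 1" and "\<And>w. w \<in> S \<Longrightarrow> polar Q w (sum id S) = 1"
proof -
  have fin: "finite S" using m4 card.infinite by fastforce
  show "Q (sum id S) = 1"
    using Q_sum_symmetric_set[OF fin sym] odd_choose_two_if_mod_4_eq_2[OF m4]
    by (simp add: of_nat_bit_eq)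
  fix w assume "w \<in> S"
  moreover have "odd (card S - 1)" using m4 by presburger
  ultimately show "polar Q w (sum id S) = 1"
    using polar_sum_pairwise_one[OF fin subset_refl _ conjunct2[OF sym[unfolded symmetric_set_def]]]
    by (simp add: fin of_nat_bit_eq)
qed

lemma symmetric_set_Un_image_add:
  assumes sym: "symmetric_set Q S" and Qs: "Q s = 1" and Ss: "\<forall>w\<in>S. polar Q w s = 1"
    and Y: "\<forall>y\<in>Y. Q y = 1 \<and> polar Q s y = 0 \<and> (\<forall>w\<in>S. polar Q w y = 0)"
    and gramY: "pairwise (\<lambda>u v. polar Q u v = 1) Y"
  shows "symmetric_set Q (S \<union> (\<lambda>y. s + y) ` Y)"
proof -
  have SY: "polar Q w (s + y) = 1" "polar Q (s + y) w = 1" if "w \<in> S" "y \<in> Y" for w y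
    using Ss Y that polar_commute by (auto simp: polar_add_right)
  have YY: "polar Q (s + y) (s + y') = 1" if "y \<in> Y" "y' \<in> Y" "y \<noteq> y'" for y y'
    using Y gramY that polar_commute[of y s]
    by (simp add: polar_add_left polar_add_right polar_self pairwise_def)
  have "Q (s + y) = 0" if "y \<in> Y" for y
    using Y Qs that by (simp add: Q_add)
  then show ?thesis
    using sym SY YY unfolding symmetric_set_def pairwise_def by auto
qed

lemma card_Un_image_add:
  assumes "finite S" "finite Y" "\<forall>w\<in>S. \<forall>y\<in>Y. polar Q w (s + y) = 1"
  shows "card (S \<union> (\<lambda>y. s + y) ` Y) = card S + card Y"
proof -
  have "S \<inter> (\<lambda>y. s + y) ` Y = {}"
    using assms(3) polar_self by fastforce
  moreover have "inj_on (\<lambda>y. s + y) Y" by (simp add: inj_on_def)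
  ultimately show ?thesis
    using assms(1,2) by (simp add: card_Un_disjoint card_image)
qed

lemma symmetric_basis_Un_image_add_sum:
  assumes basis: "symmetric_basis scale Q W S" and cardS: "card S mod 4 = 2"
    and finY: "finite Y" and evY: "even (card Y)"
    and QY: "\<forall>y\<in>Y. Q y = 1" and gramY: "pairwise (\<lambda>u v. polar Q u v = 1) Y"
    and WY: "\<forall>w\<in>W. \<forall>y\<in>Y. polar Q w y = 0"
  shows "symmetric_basis scale Q (span (W \<union> Y)) (S \<union> (\<lambda>y. sum id S + y) ` Y)"
proof -
  obtain spanS: "span S = W" and symS: "symmetric_set Q S"
    using basis unfolding symmetric_basis_iff by blast
  have finS: "finite S" using cardS card.infinite by fastforce
  define s where "s = sum id S"
  define S' where "S' = S \<union> (\<lambda>y. s + y) ` Y"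
  have sW: "s \<in> W" unfolding s_def using spanS by (auto intro: span_sum span_base)
  have SW: "S \<subseteq> W" using spanS span_superset by blast
  note s_props = sum_symmetric_set_mod_4_eq_2[OF symS cardS, folded s_def]
  have symS': "symmetric_set Q S'"
    unfolding S'_def using symS s_props QY gramY WY sW SW
    by (intro symmetric_set_Un_image_add) auto
  have "card S' = card S + card Y"
    unfolding S'_def using finS finY WY SW s_props(2)
    by (subst card_Un_image_add) (auto simp: polar_add_right)
  then have "even (card S')" using cardS evY by presburger
  then have "\<not> dependent S'"
    using symS' finS finY unfolding symmetric_set_def S'_def
    by (intro independent_if_even_pairwise_one) simp_all
  moreover have "span S' = span (span S \<union> Y)"
    unfolding S'_def span_Un_image_add[OF sW[folded spanS]] by (simp only: span_Un span_span)
  ultimately show ?thesis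
    unfolding symmetric_basis_iff spanS using symS' by (simp add: S'_def s_def)
qed

text \<open>Each element of the hexad is one vector of a hyperbolic pair plus the sum \<open>e + f\<close> of
  another pair; such a sum has \<open>Q (e + f) = 1\<close> and is orthogonal to both \<open>e\<close> and \<open>f\<close>.\<close>
lemma hexad_of_hyperbolic_pairs:
  assumes hp1: "hyperbolic_pair Q a b"
    and hp2: "hyperbolic_pair Q c d"
    and hp3: "hyperbolic_pair Q g h"
    and perp12: "\<forall>x\<in>{a, b}. \<forall>y\<in>{c, d}. polar Q x y = 0"
    and perp13: "\<forall>x\<in>{a, b}. \<forall>y\<in>{g, h}. polar Q x y = 0"
    and perp23: "\<forall>x\<in>{c, d}. \<forall>y\<in>{g, h}. polar Q x y = 0"
  shows "\<forall>y\<in>hexad a b c d g h. Q y = 1"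
    and "pairwise (\<lambda>u v. polar Q u v = 1) (hexad a b c d g h)"
    and "card (hexad a b c d g h) = 6"
    and "span (hexad a b c d g h) = span {a, b, c, d, g, h}"
proof -
  have "Q a = 0" "Q b = 0" "Q c = 0" "Q d = 0" "Q g = 0" "Q h = 0"
    "polar Q a b = 1" "polar Q c d = 1" "polar Q g h = 1"
    using hp1 hp2 hp3 unfolding hyperbolic_pair_def by auto
  moreover have "polar Q a c = 0" "polar Q a d = 0" "polar Q b c = 0" "polar Q b d = 0"
    "polar Q a g = 0" "polar Q a h = 0" "polar Q b g = 0" "polar Q b h = 0"
    "polar Q c g = 0" "polar Q c h = 0" "polar Q d g = 0" "polar Q d h = 0"
    using perp12 perp13 perp23 by auto
  ultimately have pair_values: "Q a = 0" "Q b = 0" "Q c = 0" "Q d = 0" "Q g = 0" "Q h = 0"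
    "polar Q a b = 1" "polar Q c d = 1" "polar Q g h = 1"
    "polar Q b a = 1" "polar Q d c = 1" "polar Q h g = 1"
    "polar Q a c = 0" "polar Q a d = 0" "polar Q b c = 0" "polar Q b d = 0"
    "polar Q a g = 0" "polar Q a h = 0" "polar Q b g = 0" "polar Q b h = 0"
    "polar Q c g = 0" "polar Q c h = 0" "polar Q d g = 0" "polar Q d h = 0"
    "polar Q c a = 0" "polar Q d a = 0" "polar Q c b = 0" "polar Q d b = 0"
    "polar Q g a = 0" "polar Q h a = 0" "polar Q g b = 0" "polar Q h b = 0"
    "polar Q g c = 0" "polar Q h c = 0" "polar Q g d = 0" "polar Q h d = 0"
    by (simp_all add: polar_commute)
  note expand = Q_add polar_add_left polar_add_right polar_self pair_values
  show "\<forall>y\<in>hexad a b c d g h. Q y = 1"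
    unfolding hexad_def by (simp add: expand)
  show gram: "pairwise (\<lambda>u v. polar Q u v = 1) (hexad a b c d g h)"
    unfolding hexad_def pairwise_def by (simp add: expand)
  have "distinct [d + g + h, c + g + h, b + c + d, a + c + d, a + b + h, a + b + g]"
    by (simp only: distinct.simps list.set insert_iff empty_iff de_Morgan_disj simp_thms)
      (intro conjI polar_eq_one_imp_neq; simp add: expand)
  from distinct_card[OF this] show "card (hexad a b c d g h) = 6"
    unfolding hexad_def by simp
  have in_span: "x \<in> span (hexad a b c d g h)"
    if "x = u + v + w" "u \<in> hexad a b c d g h" "v \<in> hexad a b c d g h" "w \<in> hexad a b c d g h"
    for x u v w
    using that by (simp add: span_add span_base)
  have decompose: "a = (d + g + h) + (c + g + h) + (a + c + d)" "b = (d + g + h) + (c + g + h) + (b + c + d)"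
    "c = (c + g + h) + (a + b + h) + (a + b + g)" "d = (d + g + h) + (a + b + h) + (a + b + g)"
    "g = (b + c + d) + (a + c + d) + (a + b + g)" "h = (b + c + d) + (a + c + d) + (a + b + h)"
    by (simp_all add: add.assoc add.left_commute add.commute add_self_eq_zero)
  have "{a, b, c, d, g, h} \<subseteq> span (hexad a b c d g h)"
    using in_span[OF decompose(1)] in_span[OF decompose(2)] in_span[OF decompose(3)]
      in_span[OF decompose(4)] in_span[OF decompose(5)] in_span[OF decompose(6)]
    by (simp add: hexad_def)
  moreover have "hexad a b c d g h \<subseteq> span {a, b, c, d, g, h}"
    unfolding hexad_def by (simp add: span_add span_base)
  ultimately show "span (hexad a b c d g h) = span {a, b, c, d, g, h}"
    unfolding span_eq by blast
qed

end

theorem lemma3p2: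
  fixes scale :: "bit \<Rightarrow> 'v::ab_group_add \<Rightarrow> 'v"
    and Basis :: "'v set"
    and Q :: "'v \<Rightarrow> bit"
    and W :: "'v set"
    and a b c d' g h :: 'v
  assumes fd: "finite_dimensional_vector_space scale Basis"
    and qf: "quadratic_form scale Q"
    and nd: "nondegenerate Q"
    and sub: "module.subspace scale W"
    and dim2: "vector_space.dim scale W \<ge> 2"
    and dimmod: "vector_space.dim scale W mod 4 = 2"
    and symW: "has_symmetric_basis scale Q W"
    and hp1: "hyperbolic_pair Q a b"
    and hp2: "hyperbolic_pair Q c d'"
    and hp3: "hyperbolic_pair Q g h"
    and inperp: "{a, b, c, d', g, h} \<subseteq> perp Q W - W"
    and perp12: "\<forall>x\<in>{a, b}. \<forall>y\<in>{c, d'}. polar Q x y = 0"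
    and perp13: "\<forall>x\<in>{a, b}. \<forall>y\<in>{g, h}. polar Q x y = 0"
    and perp23: "\<forall>x\<in>{c, d'}. \<forall>y\<in>{g, h}. polar Q x y = 0"
  shows "has_symmetric_basis scale Q (module.span scale (W \<union> {a, b, c, d', g, h}))"
proof -
  interpret quadratic_space_F2 scale Q
    using fd qf by (simp add: quadratic_space_F2_def quadratic_space_F2_axioms_def
        finite_dimensional_vector_space_def)
  obtain S where basis: "symmetric_basis scale Q W S"
    using symW unfolding has_symmetric_basis_def by blast
  have cardS: "card S mod 4 = 2"
  proof -
    obtain indS: "\<not> dependent S" and spanS: "span S = W"
      using basis unfolding symmetric_basis_iff by blast
    then show ?thesis using dimmod dim_span_eq_card_independent[OF indS] by simp
  qed
  note hexad = hexad_of_hyperbolic_pairs[OF hp1 hp2 hp3 perp12 perp13 perp23]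
  have fin: "finite (hexad a b c d' g h)" using hexad(3) card.infinite by force
  have "hexad a b c d' g h \<subseteq> span {a, b, c, d', g, h}"
    using hexad(4) span_superset by blast
  moreover have "\<forall>v\<in>{a, b, c, d', g, h}. polar Q w v = 0" if "w \<in> W" for w
    using inperp that unfolding perp_def by blast
  ultimately have perp_hexad: "\<forall>w\<in>W. \<forall>y\<in>hexad a b c d' g h. polar Q w y = 0"
    using polar_span_right_eq_zero by blast
  have "symmetric_basis scale Q (span (W \<union> hexad a b c d' g h))
      (S \<union> (\<lambda>y. sum id S + y) ` hexad a b c d' g h)"
    using hexad(3) by (intro symmetric_basis_Un_image_add_sum[OF basis cardS fin _ hexad(1,2) perp_hexad]) simp
  moreover have "span (W \<union> hexad a b c d' g h) = span (W \<union> {a, b, c, d', g, h})"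
    unfolding span_Un hexad(4) ..
  ultimately show ?thesis
    unfolding has_symmetric_basis_def by auto
qed

end
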